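(* Let $F$ be a finite field of characteristic $3$. Let $k\ge 0$ be an integer, $m=3k+1$, and $t$ an integer with $t^3\equiv 1\pmod m$ and $\gcd(m,t-1)=1$. Let $G=T_{3m}=\langle x,y\mid x^m=y^3=1,\ y^{-1}xy=x^t\rangle$ (of order $3m$), $FG$ its group algebra, and $H=\langle x\rangle$. Then $J(FG)\cap\Delta(G,H)=0$.
   Context: $J(FG)$ is the Jacobson radical of $FG$. $H=\langle x\rangle$ is a normal subgroup of $G$, and $\Delta(G,H)$ is the ideal of $FG$ generated by $\{h-1\mid h\in H\}$. *)

theory Defs
  imports "HOL-Algebra.Ideal" "HOL-Algebra.Generated_Groups"
begin

definition group_algebra :: "('g, 'b) monoid_scheme \<Rightarrow> ('g \<Rightarrow> 'f::field) ring" where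
  "group_algebra G =
     \<lparr>carrier = {f. \<forall>g. g \<notin> carrier G \<longrightarrow> f g = 0},
      mult = (\<lambda>f h g. if g \<in> carrier G
                      then (\<Sum>a\<in>carrier G. f a * h (inv\<^bsub>G\<^esub> a \<otimes>\<^bsub>G\<^esub> g)) else 0),
      one = (\<lambda>g. if g = \<one>\<^bsub>G\<^esub> then 1 else 0),
      zero = (\<lambda>g. 0),
      add = (\<lambda>f h g. f g + h g)\<rparr>"

definition grp_elt :: "('g, 'b) monoid_scheme \<Rightarrow> 'g \<Rightarrow> ('g \<Rightarrow> 'f::field)" where
  "grp_elt G h = (\<lambda>g. if g = h then 1 else 0)"

definition rel_aug_ideal :: "('g, 'b) monoid_scheme \<Rightarrow> 'g set \<Rightarrow> ('g \<Rightarrow> 'f::field) set" where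
  "rel_aug_ideal G H =
     genideal (group_algebra G) {(\<lambda>g. grp_elt G h g - grp_elt G \<one>\<^bsub>G\<^esub> g) | h. h \<in> H}"

definition left_ideal :: "('a, 'c) ring_scheme \<Rightarrow> 'a set \<Rightarrow> bool" where
  "left_ideal R I \<longleftrightarrow> additive_subgroup I R \<and>
     (\<forall>r\<in>carrier R. \<forall>a\<in>I. r \<otimes>\<^bsub>R\<^esub> a \<in> I)"

definition maximal_left_ideal :: "('a, 'c) ring_scheme \<Rightarrow> 'a set \<Rightarrow> bool" where
  "maximal_left_ideal R I \<longleftrightarrow> left_ideal R I \<and> I \<noteq> carrier R \<and>
     (\<forall>K. left_ideal R K \<longrightarrow> I \<subseteq> K \<longrightarrow> K = I \<or> K = carrier R)"

definition jacobson_radical :: "('a, 'c) ring_scheme \<Rightarrow> 'a set" where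
  "jacobson_radical R = carrier R \<inter> \<Inter>{I. maximal_left_ideal R I}"

end

theory Submission
  imports Defs "HOL-Library.Function_Algebras" "HOL-Algebra.Multiplicative_Group"
begin

(* Write E = hat G H for the sum of the elements of H = <x>, and N = hat G Y = 1 + y + y\<inverse>.
   Since y acts on H without fixed points, h \<mapsto> h w h\<inverse> w\<inverse> permutes H for w = y, y\<inverse>;
   as |H| = m = 1 in F, this gives K := (\<Sum>h\<in>H. h N h\<inverse>) = 1 + E y + E y\<inverse>.
   Hence K acts as the identity, from either side, on the annihilator of the central
   element E, which contains \<Delta>(G,H).
   For z \<in> J(FG) and h \<in> H, the element N z h N is right y-invariant, so it equals l N
   with l \<in> FH (the functions supported on H), and u = h N z satisfies u u = l u.
   Elements of the Jacobson radical of the finite ring FG are nilpotent, hence so is l;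
   but FH is reduced, since in characteristic 3 cubing is additive on the commutative
   algebra FH and injective on H (3 does not divide m). So N z h N = 0.
   Finally, for z \<in> J(FG) \<inter> \<Delta>(G,H) the element z h N = K z h N is a sum of terms
   h' N (h'\<inverse> z) h N = 0, and z = z K = (\<Sum>h\<in>H. z h N h\<inverse>) = 0. *)

lemma (in ring) left_ideal_cgenideal:
  assumes a: "a \<in> carrier R"
  shows "left_ideal R (PIdl a)"
proof -
  have "subgroup (PIdl a) (add_monoid R)"
  proof (rule add.subgroupI)
    show "PIdl a \<subseteq> carrier R" and "PIdl a \<noteq> {}"
      using a cgenideal_self[OF a] by (auto simp: cgenideal_def)
  next
    fix b assume "b \<in> PIdl a"
    then obtain u where "u \<in> carrier R" "b = u \<otimes> a"
      by (auto simp: cgenideal_def)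
    then show "\<ominus> b \<in> PIdl a"
      using a by (auto simp: cgenideal_def l_minus intro!: exI[of _ "\<ominus> u"])
  next
    fix b c assume "b \<in> PIdl a" "c \<in> PIdl a"
    then obtain u v where "u \<in> carrier R" "v \<in> carrier R" "b = u \<otimes> a" "c = v \<otimes> a"
      by (auto simp: cgenideal_def)
    then show "b \<oplus> c \<in> PIdl a"
      using a by (auto simp: cgenideal_def l_distr intro!: exI[of _ "u \<oplus> v"])
  qed
  moreover have "r \<otimes> b \<in> PIdl a" if r: "r \<in> carrier R" and "b \<in> PIdl a" for r b
  proof -
    obtain u where "u \<in> carrier R" "b = u \<otimes> a"
      using \<open>b \<in> PIdl a\<close> by (auto simp: cgenideal_def)
    then show ?thesis
      using r a by (auto simp: cgenideal_def m_assoc intro!: exI[of _ "r \<otimes> u"])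
  qed
  ultimately show ?thesis
    by (simp add: left_ideal_def additive_subgroup_def)
qed

lemma (in ring) left_ideal_in_maximal_left_ideal:
  assumes fin: "finite (carrier R)" and I: "left_ideal R I" and proper: "I \<noteq> carrier R"
  obtains M where "maximal_left_ideal R M" and "I \<subseteq> M"
proof -
  let ?L = "{K. left_ideal R K \<and> K \<noteq> carrier R \<and> I \<subseteq> K}"
  have "?L \<subseteq> Pow (carrier R)"
    unfolding left_ideal_def using additive_subgroup.a_subset by blast
  then have "finite ?L"
    using fin by (meson finite_Pow_iff finite_subset)
  moreover have "I \<in> ?L"
    using I proper by simp
  ultimately have "\<exists>M\<in>?L. \<forall>K\<in>?L. M \<subseteq> K \<longrightarrow> M = K"
    by (intro finite_has_maximal) auto
  then obtain M where M: "M \<in> ?L" and max: "\<forall>K\<in>?L. M \<subseteq> K \<longrightarrow> M = K"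
    by (elim bexE)
  have "maximal_left_ideal R M"
    unfolding maximal_left_ideal_def
  proof (intro conjI allI impI)
    show "left_ideal R M" and "M \<noteq> carrier R"
      using M by simp_all
    fix K assume "left_ideal R K" "M \<subseteq> K"
    then have "K \<noteq> carrier R \<Longrightarrow> K \<in> ?L"
      using M by auto
    then show "K = M \<or> K = carrier R"
      using max \<open>M \<subseteq> K\<close> by auto
  qed
  then show thesis
    using that M by blast
qed

lemma (in ring) jacobson_radical_left_mult:
  assumes r: "r \<in> carrier R" and z: "z \<in> jacobson_radical R"
  shows "r \<otimes> z \<in> jacobson_radical R"
  using assms unfolding jacobson_radical_def maximal_left_ideal_def left_ideal_def by auto

lemma (in monoid) finite_idempotent_power:
  assumes fin: "finite (carrier G)" and z: "z \<in> carrier G"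
  obtains c :: nat where "c > 0" and "z [^] c \<otimes> z [^] c = z [^] c"
proof -
  have "\<not> inj (\<lambda>n::nat. z [^] n)"
  proof
    assume "inj (\<lambda>n::nat. z [^] n)"
    moreover have "range (\<lambda>n::nat. z [^] n) \<subseteq> carrier G"
      using z by auto
    ultimately show False
      using fin by (meson finite_imageD finite_subset infinite_UNIV_nat)
  qed
  then obtain a b :: nat where "a < b" and ab: "z [^] a = z [^] b"
    by (metis inj_on_def linorder_neqE_nat UNIV_I)
  define p where "p = b - a"
  have "p > 0" and period: "z [^] (a + p) = z [^] a"
    using \<open>a < b\<close> ab by (simp_all add: p_def)
  have periodic: "z [^] (i + q * p) = z [^] i" if "a \<le> i" for i q
  proof (induction q)
    case (Suc q)
    have "z [^] (i + Suc q * p) = z [^] (i - a) \<otimes> z [^] (a + p) \<otimes> z [^] (q * p)"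
      using that z by (simp add: nat_pow_mult m_assoc algebra_simps)
    also have "\<dots> = z [^] (i + q * p)"
      using that z by (simp add: period nat_pow_mult)
    finally show ?case
      using Suc by simp
  qed simp
  define c where "c = (a + 1) * p"
  have "a \<le> c"
    using \<open>p > 0\<close> by (simp add: c_def trans_le_add2)
  then have "z [^] c \<otimes> z [^] c = z [^] c"
    using periodic[of c "a + 1"] z by (simp add: nat_pow_mult c_def)
  moreover have "c > 0"
    using \<open>p > 0\<close> by (simp add: c_def trans_le_add2)
  ultimately show thesis
    using that by blast
qed

lemma (in ring) idempotent_in_maximal_left_ideals_eq_zero:
  assumes fin: "finite (carrier R)" and e: "e \<in> carrier R" and idem: "e \<otimes> e = e"
    and in_max: "\<And>M. maximal_left_ideal R M \<Longrightarrow> e \<in> M"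
  shows "e = \<zero>"
proof (rule ccontr)
  assume "e \<noteq> \<zero>"
  let ?w = "\<one> \<ominus> e"
  have w: "?w \<in> carrier R"
    using e by simp
  have "\<one> \<notin> PIdl ?w"
  proof
    assume "\<one> \<in> PIdl ?w"
    then obtain s where s: "s \<in> carrier R" and s_w: "s \<otimes> ?w = \<one>"
      by (auto simp: cgenideal_def)
    have "?w \<otimes> e = \<zero>"
      using e idem by (simp add: minus_eq l_distr l_minus r_neg)
    then have "s \<otimes> ?w \<otimes> e = \<zero>"
      using s e by (simp add: m_assoc)
    then show False
      using \<open>e \<noteq> \<zero>\<close> e by (simp add: s_w)
  qed
  then obtain M where M: "maximal_left_ideal R M" and "PIdl ?w \<subseteq> M"
    using left_ideal_in_maximal_left_ideal[OF fin left_ideal_cgenideal[OF w]] by blast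
  then have "?w \<in> M"
    using w cgenideal_self[OF w] by blast
  have "additive_subgroup M R" and M_mult: "\<forall>r\<in>carrier R. \<forall>a\<in>M. r \<otimes> a \<in> M"
    using M by (simp_all add: maximal_left_ideal_def left_ideal_def)
  then have "?w \<oplus> e \<in> M"
    using \<open>?w \<in> M\<close> in_max[OF M] by (simp add: additive_subgroup.a_closed)
  moreover have "?w \<oplus> e = \<one>"
    using e by (simp add: minus_eq a_assoc l_neg)
  ultimately have "\<one> \<in> M"
    by simp
  have "carrier R \<subseteq> M"
  proof
    fix r assume "r \<in> carrier R"
    then show "r \<in> M"
      using M_mult \<open>\<one> \<in> M\<close> r_one by force
  qed
  then show False
    using M additive_subgroup.a_subset[OF \<open>additive_subgroup M R\<close>]
    by (auto simp: maximal_left_ideal_def)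
qed

lemma (in ring) finite_jacobson_radical_nil:
  assumes fin: "finite (carrier R)" and z: "z \<in> jacobson_radical R"
  obtains n :: nat where "z [^] n = \<zero>"
proof -
  have zc: "z \<in> carrier R"
    using z by (simp add: jacobson_radical_def)
  obtain c :: nat where "c > 0" and idem: "z [^] c \<otimes> z [^] c = z [^] c"
    using finite_idempotent_power[OF fin zc] .
  have "z [^] c = z [^] (c - 1) \<otimes> z"
    using \<open>c > 0\<close> by (metis Suc_diff_1 nat_pow_Suc)
  then have "z [^] c \<in> jacobson_radical R"
    using jacobson_radical_left_mult[OF _ z] zc by simp
  then have "z [^] c = \<zero>"
    using idempotent_in_maximal_left_ideals_eq_zero[OF fin _ idem] zc
    by (auto simp: jacobson_radical_def)
  then show thesis
    using that by blast
qed

lemma (in ring) ideal_annihilator_central: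
  assumes e: "e \<in> carrier R" and central: "\<And>r. r \<in> carrier R \<Longrightarrow> e \<otimes> r = r \<otimes> e"
  shows "ideal {a \<in> carrier R. e \<otimes> a = \<zero>} R"
proof (rule idealI[OF ring_axioms])
  show "subgroup {a \<in> carrier R. e \<otimes> a = \<zero>} (add_monoid R)"
    by (rule add.subgroupI) (auto simp: e r_distr r_minus)
next
  fix a r assume "a \<in> {a \<in> carrier R. e \<otimes> a = \<zero>}" and r: "r \<in> carrier R"
  then have a: "a \<in> carrier R" and ea: "e \<otimes> a = \<zero>"
    by auto
  have "e \<otimes> (r \<otimes> a) = (e \<otimes> r) \<otimes> a"
    using a r e by (simp add: m_assoc)
  also have "\<dots> = r \<otimes> (e \<otimes> a)"
    using a r e central by (simp add: m_assoc)
  also have "\<dots> = \<zero>"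
    using r by (simp add: ea)
  finally show "r \<otimes> a \<in> {a \<in> carrier R. e \<otimes> a = \<zero>}"
    using a r by simp
  have "e \<otimes> (a \<otimes> r) = (e \<otimes> a) \<otimes> r"
    using a r e by (simp add: m_assoc)
  also have "\<dots> = \<zero>"
    using r by (simp add: ea)
  finally show "a \<otimes> r \<in> {a \<in> carrier R. e \<otimes> a = \<zero>}"
    using a r by simp
qed

lemma (in ring) zero_mem_jacobson_radical: "\<zero> \<in> jacobson_radical R"
  by (auto simp: jacobson_radical_def maximal_left_ideal_def left_ideal_def
      intro: additive_subgroup.zero_closed)

lemma (in ring) zero_mem_genideal: "\<zero> \<in> Idl S"
  by (auto simp: genideal_def intro: additive_subgroup.zero_closed[OF ideal.axioms(1)])

definition supported_on :: "'a set \<Rightarrow> ('a \<Rightarrow> 'b::zero) set" where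
  "supported_on S = {f. \<forall>g. g \<notin> S \<longrightarrow> f g = 0}"

definition conv :: "('g, 'b) monoid_scheme \<Rightarrow> ('g \<Rightarrow> 'f::field) \<Rightarrow> ('g \<Rightarrow> 'f) \<Rightarrow> 'g \<Rightarrow> 'f" where
  "conv G f h = (\<lambda>g. if g \<in> carrier G then (\<Sum>a\<in>carrier G. f a * h (inv\<^bsub>G\<^esub> a \<otimes>\<^bsub>G\<^esub> g)) else 0)"

lemma group_algebra_simps:
  "carrier (group_algebra G :: ('g \<Rightarrow> 'f::field) ring) = supported_on (carrier G)"
  "mult (group_algebra G :: ('g \<Rightarrow> 'f) ring) = conv G"
  "one (group_algebra G :: ('g \<Rightarrow> 'f) ring) = grp_elt G \<one>\<^bsub>G\<^esub>"
  "zero (group_algebra G :: ('g \<Rightarrow> 'f) ring) = 0"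
  "add (group_algebra G :: ('g \<Rightarrow> 'f) ring) = (+)"
  by (auto simp: group_algebra_def supported_on_def conv_def grp_elt_def fun_eq_iff)

lemma supported_on_zero [simp]: "0 \<in> supported_on S"
  by (simp add: supported_on_def)

lemma supported_on_add [simp]:
  "f \<in> supported_on S \<Longrightarrow> h \<in> supported_on S \<Longrightarrow> (f :: 'a \<Rightarrow> 'b::monoid_add) + h \<in> supported_on S"
  by (simp add: supported_on_def)

lemma supported_on_uminus [simp]:
  "f \<in> supported_on S \<Longrightarrow> - (f :: 'a \<Rightarrow> 'b::group_add) \<in> supported_on S"
  by (simp add: supported_on_def)

lemma supported_on_diff [simp]:
  "f \<in> supported_on S \<Longrightarrow> h \<in> supported_on S \<Longrightarrow> (f :: 'a \<Rightarrow> 'b::group_add) - h \<in> supported_on S"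
  by (simp add: supported_on_def)

lemma supported_on_sum:
  "(\<And>i. i \<in> I \<Longrightarrow> f i \<in> supported_on S) \<Longrightarrow> (\<Sum>i\<in>I. f i :: 'a \<Rightarrow> 'b::comm_monoid_add) \<in> supported_on S"
  by (induction I rule: infinite_finite_induct) auto

lemma grp_elt_supported_on [simp]: "a \<in> S \<Longrightarrow> grp_elt G a \<in> supported_on S"
  by (simp add: supported_on_def grp_elt_def)

lemma conv_supported_on [simp]: "conv G f h \<in> supported_on (carrier G)"
  by (simp add: conv_def supported_on_def)

lemma sum_fun_apply: "(\<Sum>i\<in>I. f i) x = (\<Sum>i\<in>I. f i x)"
  by (induction I rule: infinite_finite_induct) auto

lemma conv_add_left: "conv G (f + h) k = conv G f k + conv G h k"
  by (simp add: conv_def fun_eq_iff distrib_right sum.distrib)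

lemma conv_add_right: "conv G k (f + h) = conv G k f + conv G k h"
  by (simp add: conv_def fun_eq_iff distrib_left sum.distrib)

lemma conv_diff_right: "conv G k (f - h) = conv G k f - conv G k h"
  by (simp add: conv_def fun_eq_iff right_diff_distrib sum_subtractf)

lemma conv_zero_left [simp]: "conv G 0 k = 0"
  by (simp add: conv_def fun_eq_iff)

lemma conv_zero_right [simp]: "conv G k 0 = 0"
  by (simp add: conv_def fun_eq_iff)

lemma conv_sum_left: "conv G (\<Sum>i\<in>I. f i) k = (\<Sum>i\<in>I. conv G (f i) k)"
proof (induction I rule: infinite_finite_induct)
  case (insert i I)
  show ?case
    by (simp only: sum.insert[OF insert(1,2)] conv_add_left insert(3))
qed (simp_all add: conv_def fun_eq_iff)

lemma conv_sum_right: "conv G k (\<Sum>i\<in>I. f i) = (\<Sum>i\<in>I. conv G k (f i))"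
proof (induction I rule: infinite_finite_induct)
  case (insert i I)
  show ?case
    by (simp only: sum.insert[OF insert(1,2)] conv_add_right insert(3))
qed (simp_all add: conv_def fun_eq_iff)

lemma conv_scale_left: "conv G (\<lambda>g. c * f g) h = (\<lambda>g. c * conv G f h g)"
  by (simp add: conv_def fun_eq_iff sum_distrib_left mult.assoc)

lemma conv_scale_right: "conv G f (\<lambda>g. c * h g) = (\<lambda>g. c * conv G f h g)"
  by (simp add: conv_def fun_eq_iff sum_distrib_left mult_ac)

lemma (in group) mult_inv_cancel [simp]: "a \<in> carrier G \<Longrightarrow> b \<in> carrier G \<Longrightarrow> a \<otimes> (inv a \<otimes> b) = b"
  by (simp add: m_assoc[symmetric])

lemma (in group) inv_mult_cancel [simp]: "a \<in> carrier G \<Longrightarrow> b \<in> carrier G \<Longrightarrow> inv a \<otimes> (a \<otimes> b) = b"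
  by (simp add: m_assoc[symmetric])


locale finite_group = group G for G :: "('g, 'b) monoid_scheme" (structure) +
  assumes finite_carrier: "finite (carrier G)"
begin

abbreviation conv_G :: "('g \<Rightarrow> 'f::field) \<Rightarrow> ('g \<Rightarrow> 'f) \<Rightarrow> 'g \<Rightarrow> 'f" (infixr \<open>\<star>\<close> 70)
  where "f \<star> h \<equiv> conv G f h"

lemma bij_betw_mult_left: "b \<in> carrier G \<Longrightarrow> bij_betw (\<lambda>d. b \<otimes> d) (carrier G) (carrier G)"
  by (rule bij_betw_byWitness[where f'="\<lambda>a. inv b \<otimes> a"]) (auto simp: m_assoc[symmetric])

lemma conv_assoc: "(f \<star> h) \<star> k = f \<star> h \<star> k"
proof
  fix c
  show "((f \<star> h) \<star> k) c = (f \<star> h \<star> k) c"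
  proof (cases "c \<in> carrier G")
    case False
    then show ?thesis
      by (simp add: conv_def)
  next
    case c: True
    have "((f \<star> h) \<star> k) c = (\<Sum>a\<in>carrier G. \<Sum>b\<in>carrier G. f b * h (inv b \<otimes> a) * k (inv a \<otimes> c))"
      using c by (simp add: conv_def sum_distrib_right)
    also have "\<dots> = (\<Sum>b\<in>carrier G. \<Sum>a\<in>carrier G. f b * h (inv b \<otimes> a) * k (inv a \<otimes> c))"
      by (rule sum.swap)
    also have "\<dots> = (\<Sum>b\<in>carrier G. \<Sum>d\<in>carrier G. f b * h d * k (inv d \<otimes> (inv b \<otimes> c)))"
    proof (rule sum.cong[OF refl])
      fix b assume b: "b \<in> carrier G"
      have "(\<Sum>a\<in>carrier G. f b * h (inv b \<otimes> a) * k (inv a \<otimes> c))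
          = (\<Sum>d\<in>carrier G. f b * h (inv b \<otimes> (b \<otimes> d)) * k (inv (b \<otimes> d) \<otimes> c))"
        by (rule sum.reindex_bij_betw[OF bij_betw_mult_left[OF b], symmetric])
      also have "\<dots> = (\<Sum>d\<in>carrier G. f b * h d * k (inv d \<otimes> (inv b \<otimes> c)))"
        by (rule sum.cong[OF refl]) (simp add: b c m_assoc[symmetric] inv_mult_group)
      finally show "(\<Sum>a\<in>carrier G. f b * h (inv b \<otimes> a) * k (inv a \<otimes> c)) = \<dots>" .
    qed
    also have "\<dots> = (f \<star> h \<star> k) c"
      using c by (simp add: conv_def sum_distrib_left mult.assoc)
    finally show ?thesis .
  qed
qed

lemma conv_grp_elt_left:
  "a \<in> carrier G \<Longrightarrow> grp_elt G a \<star> f = (\<lambda>g. if g \<in> carrier G then f (inv a \<otimes> g) else 0)"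
  by (simp add: conv_def grp_elt_def fun_eq_iff if_distrib[where f="\<lambda>x. x * _"] finite_carrier
      cong: if_cong)

lemma conv_grp_elt_right:
  assumes b: "b \<in> carrier G"
  shows "f \<star> grp_elt G b = (\<lambda>g. if g \<in> carrier G then f (g \<otimes> inv b) else 0)"
proof
  fix g
  show "(f \<star> grp_elt G b) g = (if g \<in> carrier G then f (g \<otimes> inv b) else 0)"
  proof (cases "g \<in> carrier G")
    case g: True
    have "inv a \<otimes> g = b \<longleftrightarrow> a = g \<otimes> inv b" if "a \<in> carrier G" for a
      using that b g by (metis inv_solve_left inv_solve_right inv_closed m_closed)
    then have "(f \<star> grp_elt G b) g = (\<Sum>a\<in>carrier G. if a = g \<otimes> inv b then f a else 0)"
      using g by (auto simp: conv_def grp_elt_def intro!: sum.cong)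
    also have "\<dots> = f (g \<otimes> inv b)"
      using g b finite_carrier by simp
    finally show ?thesis
      using g by simp
  qed (simp add: conv_def)
qed

lemma conv_grp_elt_grp_elt:
  assumes a: "a \<in> carrier G" and b: "b \<in> carrier G"
  shows "grp_elt G a \<star> grp_elt G b = (grp_elt G (a \<otimes> b) :: 'g \<Rightarrow> 'f::field)"
proof -
  have "inv a \<otimes> g = b \<longleftrightarrow> g = a \<otimes> b" if "g \<in> carrier G" for g
    using that a b by (metis inv_solve_left m_closed inv_closed)
  then show ?thesis
    using a b by (simp add: conv_grp_elt_left) (auto simp: grp_elt_def fun_eq_iff)
qed

lemma conv_one_left [simp]: "f \<in> supported_on (carrier G) \<Longrightarrow> grp_elt G \<one> \<star> f = f"
  by (auto simp: conv_grp_elt_left supported_on_def fun_eq_iff)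

lemma conv_one_right [simp]: "f \<in> supported_on (carrier G) \<Longrightarrow> f \<star> grp_elt G \<one> = f"
  by (auto simp: conv_grp_elt_right supported_on_def fun_eq_iff)

lemma ring_group_algebra: "ring (group_algebra G :: ('g \<Rightarrow> 'f::field) ring)"
proof (rule ringI)
  show "abelian_group (group_algebra G :: ('g \<Rightarrow> 'f) ring)"
  proof (rule abelian_groupI, simp_all only: group_algebra_simps)
    fix f :: "'g \<Rightarrow> 'f"
    assume "f \<in> supported_on (carrier G)"
    then show "\<exists>h\<in>supported_on (carrier G). h + f = 0"
      by (intro bexI[of _ "- f"]) auto
  qed (auto simp: add_ac)
  show "monoid (group_algebra G :: ('g \<Rightarrow> 'f) ring)"
    by (rule monoidI) (simp_all add: group_algebra_simps conv_assoc)
qed (simp_all add: group_algebra_simps conv_add_left conv_add_right)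

lemma finite_group_algebra:
  "finite (carrier (group_algebra G :: ('g \<Rightarrow> 'f::{field,finite}) ring))"
proof -
  have "supported_on (carrier G) =
      {f :: 'g \<Rightarrow> 'f. \<forall>g. (g \<in> carrier G \<longrightarrow> f g \<in> UNIV) \<and> (g \<notin> carrier G \<longrightarrow> f g = 0)}"
    by (auto simp: supported_on_def)
  then show ?thesis
    using finite_set_of_finite_funs[OF finite_carrier, of "UNIV :: 'f set" 0] by (simp add: group_algebra_simps)
qed

lemma group_algebra_pow_0:
  "(f :: 'g \<Rightarrow> 'f::field) [^]\<^bsub>group_algebra G\<^esub> (0::nat) = grp_elt G \<one>"
  by (simp add: group_algebra_simps)

lemma group_algebra_pow_Suc:
  "(f :: 'g \<Rightarrow> 'f::field) [^]\<^bsub>group_algebra G\<^esub> Suc n = (f [^]\<^bsub>group_algebra G\<^esub> n) \<star> f"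
  by (simp add: group_algebra_simps)

lemma group_algebra_pow_supported_on [simp]:
  "(f :: 'g \<Rightarrow> 'f::field) [^]\<^bsub>group_algebra G\<^esub> (n::nat) \<in> supported_on (carrier G)"
  by (cases n) (simp_all add: group_algebra_simps)

lemma group_algebra_pow_add:
  "(f :: 'g \<Rightarrow> 'f::field) [^]\<^bsub>group_algebra G\<^esub> (a + b :: nat)
     = (f [^]\<^bsub>group_algebra G\<^esub> a) \<star> (f [^]\<^bsub>group_algebra G\<^esub> b)"
  by (induction b) (simp_all add: group_algebra_simps conv_assoc)

lemma group_algebra_pow_mult:
  "(f :: 'g \<Rightarrow> 'f::field) [^]\<^bsub>group_algebra G\<^esub> (a * b :: nat)
     = (f [^]\<^bsub>group_algebra G\<^esub> a) [^]\<^bsub>group_algebra G\<^esub> b"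
proof (induction b)
  case (Suc b)
  have "f [^]\<^bsub>group_algebra G\<^esub> (a * Suc b) = f [^]\<^bsub>group_algebra G\<^esub> (a * b + a)"
    by (simp add: add.commute)
  also have "\<dots> = (f [^]\<^bsub>group_algebra G\<^esub> a) [^]\<^bsub>group_algebra G\<^esub> Suc b"
    by (simp only: group_algebra_pow_add Suc.IH group_algebra_pow_Suc)
  finally show ?case .
qed simp

lemma conv_commute_cube_add:
  fixes f h :: "'g \<Rightarrow> 'f::field"
  assumes char3: "(3 :: 'f) = 0" and comm: "f \<star> h = h \<star> f"
  shows "(f + h) \<star> (f + h) \<star> (f + h) = f \<star> f \<star> f + h \<star> h \<star> h"
proof -
  have hff: "h \<star> f \<star> f = f \<star> h \<star> f"
  proof -
    have "h \<star> f \<star> f = (h \<star> f) \<star> f"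
      by (simp add: conv_assoc)
    also have "\<dots> = (f \<star> h) \<star> f"
      by (simp add: comm)
    finally show ?thesis
      by (simp add: conv_assoc)
  qed
  have fhh: "f \<star> h \<star> h = h \<star> h \<star> f"
  proof -
    have "f \<star> h \<star> h = (f \<star> h) \<star> h"
      by (simp add: conv_assoc)
    also have "\<dots> = (h \<star> f) \<star> h"
      by (simp add: comm)
    finally show ?thesis
      by (simp add: conv_assoc comm)
  qed
  have triple: "x + x + x = 0" for x :: "'g \<Rightarrow> 'f"
  proof -
    have "x g + x g + x g = (1 + 1 + 1) * x g" for g
      by (simp add: distrib_right)
    then show ?thesis
      using char3 by (simp add: fun_eq_iff)
  qed
  let ?A = "f \<star> h \<star> f" and ?B = "h \<star> h \<star> f"
  have "(f + h) \<star> (f + h) \<star> (f + h) = f \<star> f \<star> f + h \<star> h \<star> h + (?A + ?A + ?A) + (?B + ?B + ?B)"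
    by (simp only: conv_add_left conv_add_right hff fhh comm) (simp add: add_ac)
  then show ?thesis
    by (simp only: triple add_0_right)
qed

lemma conv_scaled_grp_elt:
  assumes "a \<in> carrier G" and "b \<in> carrier G"
  shows "(\<lambda>g. c * grp_elt G a g) \<star> (\<lambda>g. d * grp_elt G b g) = (\<lambda>g. (c * d :: 'f::field) * grp_elt G (a \<otimes> b) g)"
  using assms by (simp add: conv_scale_left conv_scale_right conv_grp_elt_grp_elt mult_ac)


lemma group_algebra_jacobson_radical_nil:
  fixes z :: "'g \<Rightarrow> 'f::{field,finite}"
  assumes "z \<in> jacobson_radical (group_algebra G)"
  obtains n :: nat where "z [^]\<^bsub>group_algebra G\<^esub> n = 0"
proof -
  obtain n :: nat where "z [^]\<^bsub>group_algebra G\<^esub> n = \<zero>\<^bsub>group_algebra G\<^esub>"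
    by (rule ring.finite_jacobson_radical_nil[OF ring_group_algebra finite_group_algebra assms])
  then show thesis
    by (intro that) (simp add: group_algebra_simps)
qed

lemma jacobson_radical_conv_left:
  fixes z :: "'g \<Rightarrow> 'f::field"
  assumes "r \<in> supported_on (carrier G)" and "z \<in> jacobson_radical (group_algebra G)"
  shows "r \<star> z \<in> jacobson_radical (group_algebra G)"
  using ring.jacobson_radical_left_mult[OF ring_group_algebra _ assms(2)] assms(1)
  by (simp add: group_algebra_simps)

lemma group_algebra_pow_conv_eq_zero_of_square_eq:
  fixes u :: "'g \<Rightarrow> 'f::field"
  assumes u: "u \<in> supported_on (carrier G)" and square: "u \<star> u = l \<star> u"
    and nil: "u [^]\<^bsub>group_algebra G\<^esub> (n::nat) = 0"
  shows "l [^]\<^bsub>group_algebra G\<^esub> n \<star> u = 0"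
proof -
  have pow_Suc: "u [^]\<^bsub>group_algebra G\<^esub> Suc j = l [^]\<^bsub>group_algebra G\<^esub> j \<star> u" for j
  proof (induction j)
    case 0
    then show ?case
      using u by (simp add: group_algebra_simps)
  next
    case (Suc j)
    have "u [^]\<^bsub>group_algebra G\<^esub> Suc (Suc j) = u [^]\<^bsub>group_algebra G\<^esub> Suc j \<star> u"
      by (rule group_algebra_pow_Suc)
    also have "\<dots> = l [^]\<^bsub>group_algebra G\<^esub> j \<star> u \<star> u"
      by (simp only: Suc.IH conv_assoc)
    also have "\<dots> = l [^]\<^bsub>group_algebra G\<^esub> Suc j \<star> u"
      by (simp only: square group_algebra_pow_Suc conv_assoc)
    finally show ?case .
  qed
  have "l [^]\<^bsub>group_algebra G\<^esub> n \<star> u = u [^]\<^bsub>group_algebra G\<^esub> Suc n"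
    by (rule pow_Suc[symmetric])
  also have "\<dots> = u [^]\<^bsub>group_algebra G\<^esub> n \<star> u"
    by (rule group_algebra_pow_Suc)
  finally show ?thesis
    by (simp add: nil)
qed

end

locale commutative_subgroup = finite_group G for G :: "('g, 'b) monoid_scheme" (structure) +
  fixes H :: "'g set"
  assumes subgroup: "subgroup H G"
    and commute: "\<And>a b. a \<in> H \<Longrightarrow> b \<in> H \<Longrightarrow> a \<otimes> b = b \<otimes> a"
begin

lemma subgroup_carrier: "a \<in> H \<Longrightarrow> a \<in> carrier G"
  using subgroup.subset[OF subgroup] by blast

lemma finite_subgroup: "finite H"
  using finite_carrier subgroup_carrier by (meson finite_subset subsetI)

lemma supported_on_subgroup_carrier: "f \<in> supported_on H \<Longrightarrow> f \<in> supported_on (carrier G)"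
  unfolding supported_on_def using subgroup_carrier by blast

lemma conv_supported_on_subgroup:
  assumes f: "f \<in> supported_on H" and h: "h \<in> supported_on H"
  shows "f \<star> h \<in> supported_on H"
  unfolding supported_on_def
proof (intro CollectI allI impI)
  fix g assume g: "g \<notin> H"
  have vanish: "f a * h (inv a \<otimes> g) = 0" if a: "a \<in> carrier G" and "g \<in> carrier G" for a
  proof (cases "a \<in> H \<and> inv a \<otimes> g \<in> H")
    case True
    then have "a \<otimes> (inv a \<otimes> g) \<in> H"
      using subgroup.m_closed[OF subgroup] by blast
    then show ?thesis
      using g a \<open>g \<in> carrier G\<close> by (simp add: m_assoc[symmetric])
  next
    case False
    then show ?thesis
      using f h by (auto simp: supported_on_def)
  qed
  show "(f \<star> h) g = 0"
    unfolding conv_def using vanish by (simp add: sum.neutral)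
qed

lemma supported_on_subgroup_mult_inv_commute:
  assumes h: "h \<in> supported_on H" and g: "g \<in> carrier G" and b: "b \<in> H"
  shows "h (g \<otimes> inv b) = h (inv b \<otimes> g)"
proof (cases "g \<in> H")
  case True
  then show ?thesis
    using commute subgroup.m_inv_closed[OF subgroup] b by metis
next
  case False
  have bc: "b \<in> carrier G"
    by (rule subgroup_carrier[OF b])
  have "g \<otimes> inv b \<notin> H"
  proof
    assume "g \<otimes> inv b \<in> H"
    then have "g \<otimes> inv b \<otimes> b \<in> H"
      using b subgroup.m_closed[OF subgroup] by blast
    then show False
      using False g bc by (simp add: m_assoc)
  qed
  moreover have "inv b \<otimes> g \<notin> H"
  proof
    assume "inv b \<otimes> g \<in> H"
    then have "b \<otimes> (inv b \<otimes> g) \<in> H"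
      using b subgroup.m_closed[OF subgroup] by blast
    then show False
      using False g bc by simp
  qed
  ultimately show ?thesis
    using h by (simp add: supported_on_def)
qed

lemma conv_commute_supported_on_subgroup:
  assumes f: "f \<in> supported_on H" and h: "h \<in> supported_on H"
  shows "f \<star> h = h \<star> f"
proof
  fix g
  show "(f \<star> h) g = (h \<star> f) g"
  proof (cases "g \<in> carrier G")
    case False
    then show ?thesis
      by (simp add: conv_def)
  next
    case g: True
    have bij: "bij_betw (\<lambda>b. g \<otimes> inv b) (carrier G) (carrier G)"
      by (rule bij_betw_byWitness[where f'="\<lambda>a. inv a \<otimes> g"])
         (use g in \<open>auto simp: inv_mult_group m_assoc\<close>)
    have swap: "h (g \<otimes> inv b) * f (inv (g \<otimes> inv b) \<otimes> g) = f b * h (inv b \<otimes> g)"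
      if b: "b \<in> carrier G" for b
    proof (cases "b \<in> H")
      case True
      then show ?thesis
        using g b supported_on_subgroup_mult_inv_commute[OF h g] by (simp add: inv_mult_group m_assoc)
    next
      case False
      then show ?thesis
        using f g b by (simp add: supported_on_def inv_mult_group m_assoc)
    qed
    have "(h \<star> f) g = (\<Sum>a\<in>carrier G. h a * f (inv a \<otimes> g))"
      using g by (simp add: conv_def)
    also have "\<dots> = (\<Sum>b\<in>carrier G. h (g \<otimes> inv b) * f (inv (g \<otimes> inv b) \<otimes> g))"
      by (rule sum.reindex_bij_betw[OF bij, symmetric])
    also have "\<dots> = (\<Sum>b\<in>carrier G. f b * h (inv b \<otimes> g))"
      by (rule sum.cong[OF refl]) (rule swap)
    also have "\<dots> = (f \<star> h) g"
      using g by (simp add: conv_def)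
    finally show ?thesis ..
  qed
qed

lemma pow_supported_on_subgroup:
  "f \<in> supported_on H \<Longrightarrow> f [^]\<^bsub>group_algebra G\<^esub> (n::nat) \<in> supported_on H"
  by (induction n) (simp_all add: group_algebra_simps subgroup.one_closed[OF subgroup]
      conv_supported_on_subgroup)

lemma supported_on_subgroup_expansion:
  "f \<in> supported_on H \<Longrightarrow> (\<Sum>a\<in>H. (\<lambda>g. f a * grp_elt G a g)) = f"
  by (auto simp: fun_eq_iff sum_fun_apply grp_elt_def finite_subgroup supported_on_def
      if_distrib[where f="\<lambda>x. _ * x"] cong: if_cong)

lemma cube_sum_scaled_grp_elt:
  fixes c :: "'g \<Rightarrow> 'f::field"
  assumes char3: "(3 :: 'f) = 0" and "finite S" and "S \<subseteq> H"
  shows "(\<Sum>a\<in>S. (\<lambda>g. c a * grp_elt G a g)) \<star> (\<Sum>a\<in>S. (\<lambda>g. c a * grp_elt G a g))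
           \<star> (\<Sum>a\<in>S. (\<lambda>g. c a * grp_elt G a g))
         = (\<Sum>a\<in>S. (\<lambda>g. c a ^ 3 * grp_elt G (a \<otimes> a \<otimes> a) g))"
  using \<open>finite S\<close> \<open>S \<subseteq> H\<close>
proof (induction S rule: finite_induct)
  case empty
  then show ?case
    by (simp add: conv_def fun_eq_iff)
next
  case (insert b S)
  let ?t = "\<lambda>g. c b * grp_elt G b g" and ?s = "\<Sum>a\<in>S. (\<lambda>g. c a * grp_elt G a g)"
  have b: "b \<in> H" and "b \<in> carrier G"
    using insert subgroup_carrier by auto
  have "?t \<in> supported_on H"
    using b by (simp add: supported_on_def grp_elt_def)
  moreover have "?s \<in> supported_on H"
    using insert by (intro supported_on_sum) (auto simp: supported_on_def grp_elt_def)
  ultimately have frobenius: "(?t + ?s) \<star> (?t + ?s) \<star> (?t + ?s) = ?t \<star> ?t \<star> ?t + ?s \<star> ?s \<star> ?s"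
    by (intro conv_commute_cube_add char3 conv_commute_supported_on_subgroup)
  have "?t \<star> ?t \<star> ?t = (\<lambda>g. c b * (c b * c b) * grp_elt G (b \<otimes> (b \<otimes> b)) g)"
    using \<open>b \<in> carrier G\<close> by (simp only: conv_scaled_grp_elt m_closed)
  then have cube_b: "?t \<star> ?t \<star> ?t = (\<lambda>g. c b ^ 3 * grp_elt G (b \<otimes> b \<otimes> b) g)"
    using \<open>b \<in> carrier G\<close> by (simp add: m_assoc power3_eq_cube mult.assoc)
  have IH: "?s \<star> ?s \<star> ?s = (\<Sum>a\<in>S. (\<lambda>g. c a ^ 3 * grp_elt G (a \<otimes> a \<otimes> a) g))"
    using insert.prems by (intro insert.IH) simp
  show ?case
    by (simp only: sum.insert[OF insert.hyps] frobenius cube_b IH)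
qed

lemma cube_eq_zero_supported_on_subgroup:
  fixes f :: "'g \<Rightarrow> 'f::field"
  assumes char3: "(3 :: 'f) = 0" and cube_inj: "inj_on (\<lambda>a. a \<otimes> a \<otimes> a) H"
    and f: "f \<in> supported_on H" and cube: "f \<star> f \<star> f = 0"
  shows "f = 0"
proof
  fix b
  have "(\<Sum>a\<in>H. (\<lambda>g. f a ^ 3 * grp_elt G (a \<otimes> a \<otimes> a) g))
      = (\<Sum>a\<in>H. (\<lambda>g. f a * grp_elt G a g)) \<star> (\<Sum>a\<in>H. (\<lambda>g. f a * grp_elt G a g))
          \<star> (\<Sum>a\<in>H. (\<lambda>g. f a * grp_elt G a g))"
    by (rule cube_sum_scaled_grp_elt[OF char3 finite_subgroup subset_refl, symmetric])
  also have "\<dots> = 0"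
    by (simp only: supported_on_subgroup_expansion[OF f] cube)
  finally have sum_zero: "(\<Sum>a\<in>H. (\<lambda>g. f a ^ 3 * grp_elt G (a \<otimes> a \<otimes> a) g)) = 0" .
  show "f b = 0 b"
  proof (cases "b \<in> H")
    case True
    have "(\<Sum>a\<in>H. (\<lambda>g. f a ^ 3 * grp_elt G (a \<otimes> a \<otimes> a) g)) (b \<otimes> b \<otimes> b)
        = (\<Sum>a\<in>H. if a = b then f a ^ 3 else 0)"
      unfolding sum_fun_apply
      by (rule sum.cong[OF refl]) (use True cube_inj in \<open>auto simp: grp_elt_def inj_on_def\<close>)
    also have "\<dots> = f b ^ 3"
      using True finite_subgroup by simp
    finally show ?thesis
      using sum_zero by simp
  next
    case False
    then show ?thesis
      using f by (simp add: supported_on_def)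
  qed
qed

lemma pow_three_pow_eq_zero_supported_on_subgroup:
  fixes f :: "'g \<Rightarrow> 'f::field"
  assumes char3: "(3 :: 'f) = 0" and cube_inj: "inj_on (\<lambda>a. a \<otimes> a \<otimes> a) H"
    and "f \<in> supported_on H" and "f [^]\<^bsub>group_algebra G\<^esub> ((3::nat) ^ j) = 0"
  shows "f = 0"
  using assms(3,4)
proof (induction j arbitrary: f)
  case 0
  then show ?case
    using supported_on_subgroup_carrier[of f] by (simp add: group_algebra_simps)
next
  case (Suc j)
  have "f \<star> f \<star> f = f [^]\<^bsub>group_algebra G\<^esub> (3::nat)"
    using supported_on_subgroup_carrier[OF Suc.prems(1)]
    by (simp only: numeral_3_eq_3 group_algebra_pow_Suc group_algebra_pow_0 conv_one_left conv_assoc)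
  also have "\<dots> = 0"
  proof (rule Suc.IH[OF pow_supported_on_subgroup[OF Suc.prems(1)]])
    show "(f [^]\<^bsub>group_algebra G\<^esub> (3::nat)) [^]\<^bsub>group_algebra G\<^esub> ((3::nat) ^ j) = 0"
      using Suc.prems(2) by (simp only: group_algebra_pow_mult[symmetric] power_Suc)
  qed
  finally show ?case
    by (rule cube_eq_zero_supported_on_subgroup[OF char3 cube_inj Suc.prems(1)])
qed

lemma nilpotent_supported_on_subgroup_eq_zero:
  fixes f :: "'g \<Rightarrow> 'f::field"
  assumes char3: "(3 :: 'f) = 0" and cube_inj: "inj_on (\<lambda>a. a \<otimes> a \<otimes> a) H"
    and f: "f \<in> supported_on H" and nil: "f [^]\<^bsub>group_algebra G\<^esub> (n::nat) = 0"
  shows "f = 0"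
proof (rule pow_three_pow_eq_zero_supported_on_subgroup[OF char3 cube_inj f])
  have "n < 2 ^ n"
    by (rule less_exp)
  also have "(2::nat) ^ n \<le> 3 ^ n"
    by (rule power_mono) auto
  finally have "n \<le> 3 ^ n"
    by (rule less_imp_le)
  then obtain r where r: "3 ^ n = n + r"
    using le_Suc_ex by blast
  show "f [^]\<^bsub>group_algebra G\<^esub> ((3::nat) ^ n) = 0"
    by (simp only: r group_algebra_pow_add nil conv_zero_left)
qed

end

definition hat :: "('g, 'b) monoid_scheme \<Rightarrow> 'g set \<Rightarrow> 'g \<Rightarrow> 'f::field" where
  "hat G S = (\<Sum>s\<in>S. grp_elt G s)"

locale T3m_group = finite_group G for G :: "('g, 'b) monoid_scheme" (structure) +
  fixes x y :: 'g and m k :: nat and t :: int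
  assumes m_eq: "m = 3 * k + 1"
    and coprime_m_t: "gcd (int m) (t - 1) = 1"
    and x: "x \<in> carrier G" and y: "y \<in> carrier G"
    and generated: "generate G {x, y} = carrier G"
    and x_pow_m: "x [^] m = \<one>" and y_cube: "y [^] (3::nat) = \<one>"
    and conj_x: "inv y \<otimes> x \<otimes> y = x [^] t"
    and order_G: "order G = 3 * m"
begin

abbreviation H :: "'g set" where "H \<equiv> generate G {x}"

abbreviation Y :: "'g set" where "Y \<equiv> {\<one>, y, inv y}"

lemma H_eq_int_pows: "H = {x [^] (i::int) | i. True}"
  using generate_pow[OF x] by simp

lemma H_subgroup: "subgroup H G"
  by (rule generate_is_subgroup) (simp add: x)

lemma H_commute: "c \<in> H \<Longrightarrow> d \<in> H \<Longrightarrow> c \<otimes> d = d \<otimes> c"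
  using x by (auto simp: H_eq_int_pows int_pow_mult[symmetric] add.commute)

sublocale commutative_subgroup G H
proof (rule commutative_subgroup.intro[OF finite_group_axioms commutative_subgroup_axioms.intro])
  show "subgroup H G"
    by (rule H_subgroup)
qed (rule H_commute)

lemma x_in_H: "x \<in> H"
  by (rule generate.incl) simp

lemma pow_m_eq_one: "c \<in> H \<Longrightarrow> c [^] m = \<one>"
proof -
  assume "c \<in> H"
  then obtain i where c: "c = x [^] (i::int)"
    by (auto simp: H_eq_int_pows)
  have "c [^] m = (x [^] i) [^] (int m)"
    by (simp add: c int_pow_int)
  also have "\<dots> = (x [^] (int m)) [^] i"
    using x by (simp add: int_pow_pow mult.commute)
  also have "\<dots> = \<one>"
    by (simp add: int_pow_int x_pow_m)
  finally show ?thesis .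
qed

lemma conj_y_eq_pow: "c \<in> H \<Longrightarrow> inv y \<otimes> c \<otimes> y = c [^] t"
proof -
  assume "c \<in> H"
  then obtain i where c: "c = x [^] (i::int)"
    by (auto simp: H_eq_int_pows)
  have hom: "(\<lambda>g. inv y \<otimes> g \<otimes> y) \<in> hom G G"
    unfolding hom_def using y by (auto simp: m_assoc)
  have "inv y \<otimes> c \<otimes> y = (inv y \<otimes> x \<otimes> y) [^] i"
    unfolding c using hom_int_pow[OF hom x is_group is_group, of i] by simp
  also have "\<dots> = c [^] t"
    using x by (simp add: c conj_x int_pow_pow mult.commute)
  finally show ?thesis .
qed

lemma y_cube_eq_one: "y \<otimes> (y \<otimes> y) = \<one>"
  using y_cube y by (simp add: numeral_3_eq_3 m_assoc)

lemma y_cube_cancel: "b \<in> carrier G \<Longrightarrow> y \<otimes> (y \<otimes> (y \<otimes> b)) = b"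
  using y_cube_eq_one y by (simp add: m_assoc[symmetric])

lemma inv_y_eq: "inv y = y \<otimes> y"
  using y_cube_eq_one y by (metis inv_char m_closed m_assoc)

lemma inv_y_mult_inv_y: "inv y \<otimes> inv y = y"
  using y by (simp add: inv_y_eq m_assoc y_cube_cancel)

lemma Y_carrier: "a \<in> Y \<Longrightarrow> a \<in> carrier G"
  using y by auto

lemma Y_mult_closed: "a \<in> Y \<Longrightarrow> b \<in> Y \<Longrightarrow> a \<otimes> b \<in> Y"
  using y by (auto simp: inv_y_mult_inv_y simp flip: inv_y_eq)

lemma conj_Y_closed:
  assumes a: "a \<in> Y" and c: "c \<in> H"
  shows "a \<otimes> c \<otimes> inv a \<in> H"
proof -
  have conj_inv_y: "inv y \<otimes> d \<otimes> y \<in> H" if "d \<in> H" for d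
    using that conj_y_eq_pow subgroup_int_pow_closed[OF H_subgroup] by simp
  have "y \<otimes> c \<otimes> inv y = inv y \<otimes> (inv y \<otimes> c \<otimes> y) \<otimes> y"
    using y subgroup_carrier[OF c] by (simp add: m_assoc inv_y_eq y_cube_cancel)
  then show ?thesis
    using a c y conj_inv_y[OF c] conj_inv_y[OF conj_inv_y[OF c]] subgroup_carrier by auto
qed

lemma carrier_decomp: "g \<in> carrier G \<Longrightarrow> \<exists>h\<in>H. \<exists>a\<in>Y. g = h \<otimes> a"
  unfolding generated[symmetric]
proof (induction rule: generate.induct)
  case one
  show ?case
    using subgroup.one_closed[OF H_subgroup] by force
next
  case (incl g)
  then show ?case
    using x_in_H x y subgroup.one_closed[OF H_subgroup] by force
next
  case (inv g)
  then show ?case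
    using subgroup.m_inv_closed[OF H_subgroup x_in_H] x y subgroup.one_closed[OF H_subgroup]
    by force
next
  case (eng g1 g2)
  then obtain h1 a h2 b where h: "h1 \<in> H" "a \<in> Y" "h2 \<in> H" "b \<in> Y" "g1 = h1 \<otimes> a" "g2 = h2 \<otimes> b"
    by blast
  have "g1 \<otimes> g2 = (h1 \<otimes> (a \<otimes> h2 \<otimes> inv a)) \<otimes> (a \<otimes> b)"
    using h subgroup_carrier Y_carrier by (simp add: m_assoc)
  moreover have "h1 \<otimes> (a \<otimes> h2 \<otimes> inv a) \<in> H"
    using h conj_Y_closed subgroup.m_closed[OF H_subgroup] by blast
  ultimately show ?case
    using Y_mult_closed h by blast
qed

lemma H_normal: "H \<lhd> G"
proof (rule normal_invI[OF H_subgroup])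
  fix g c assume g: "g \<in> carrier G" and c: "c \<in> H"
  obtain h a where h: "h \<in> H" and a: "a \<in> Y" and g_eq: "g = h \<otimes> a"
    using carrier_decomp[OF g] by blast
  have "g \<otimes> c \<otimes> inv g = h \<otimes> (a \<otimes> c \<otimes> inv a) \<otimes> inv h"
    using h a c subgroup_carrier Y_carrier by (simp add: g_eq inv_mult_group m_assoc)
  then show "g \<otimes> c \<otimes> inv g \<in> H"
    using h c conj_Y_closed[OF a c] subgroup.m_closed[OF H_subgroup] subgroup.m_inv_closed[OF H_subgroup]
    by auto
qed

lemma card_H: "card H = m"
proof -
  have "card H = ord x"
    using generate_pow_card[OF x] by simp
  also have "\<dots> \<le> m"
  proof (rule dvd_imp_le)
    show "ord x dvd m"
      using pow_eq_id[OF x] x_pow_m by simp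
  qed (simp add: m_eq)
  finally have le: "card H \<le> m" .
  have "carrier G \<subseteq> (\<lambda>h. h \<otimes> \<one>) ` H \<union> (\<lambda>h. h \<otimes> y) ` H \<union> (\<lambda>h. h \<otimes> inv y) ` H"
    using carrier_decomp by blast
  then have "card (carrier G) \<le> card H + card H + card H"
    using finite_subgroup card_image_le card_Un_le
    by (smt (verit) card_mono finite_Un finite_imageI le_trans add_le_mono)
  then show ?thesis
    using le order_G by (simp add: order_def)
qed

lemma y_notin_H: "y \<notin> H"
proof
  assume "y \<in> H"
  then have "generate G {x, y} \<subseteq> H"
    using x_in_H by (intro generate_subgroup_incl[OF _ H_subgroup]) auto
  then have "carrier G \<subseteq> H"
    by (simp add: generated)
  then have "card (carrier G) \<le> card H"
    using finite_subgroup by (rule card_mono[rotated])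
  then show False
    using card_H order_G m_eq by (simp add: order_def)
qed

lemma mult_y_notin_H: "c \<in> H \<Longrightarrow> c \<otimes> y \<notin> H"
  using y_notin_H y subgroup_carrier subgroup.m_closed[OF H_subgroup] subgroup.m_inv_closed[OF H_subgroup]
  by (metis inv_mult_cancel)

lemma mult_inv_y_notin_H: "c \<in> H \<Longrightarrow> c \<otimes> inv y \<notin> H"
  using y_notin_H y subgroup_carrier subgroup.m_closed[OF H_subgroup] subgroup.m_inv_closed[OF H_subgroup]
  by (metis inv_mult_cancel inv_closed inv_inv)

lemma coset_trichotomy:
  assumes g: "g \<in> carrier G"
  shows "(g \<in> H \<and> g \<otimes> inv y \<notin> H \<and> g \<otimes> y \<notin> H) \<or>
         (g \<notin> H \<and> g \<otimes> inv y \<in> H \<and> g \<otimes> y \<notin> H) \<or>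
         (g \<notin> H \<and> g \<otimes> inv y \<notin> H \<and> g \<otimes> y \<in> H)"
proof -
  have "g \<otimes> inv y \<otimes> inv y = g \<otimes> y"
    using g y by (simp add: m_assoc inv_y_mult_inv_y)
  then have "\<not> (g \<otimes> inv y \<in> H \<and> g \<otimes> y \<in> H)"
    using mult_inv_y_notin_H[of "g \<otimes> inv y"] by auto
  moreover have "g \<in> H \<or> g \<otimes> inv y \<in> H \<or> g \<otimes> y \<in> H"
    using carrier_decomp[OF g] y subgroup_carrier by (auto simp: m_assoc)
  ultimately show ?thesis
    using mult_y_notin_H mult_inv_y_notin_H by blast
qed

lemma fixed_point_free:
  assumes c: "c \<in> H" and w: "w \<in> {y, inv y}" and comm: "c \<otimes> w = w \<otimes> c"
  shows "c = \<one>"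
proof -
  have cc: "c \<in> carrier G"
    by (rule subgroup_carrier[OF c])
  have "c \<otimes> y = y \<otimes> c"
  proof (cases "w = y")
    case True
    with comm show ?thesis
      by simp
  next
    case False
    then have "c \<otimes> inv y = inv y \<otimes> c"
      using w comm by auto
    then have "y \<otimes> (c \<otimes> inv y) \<otimes> y = y \<otimes> (inv y \<otimes> c) \<otimes> y"
      by simp
    then show ?thesis
      using cc y by (simp add: m_assoc)
  qed
  then have "inv y \<otimes> c \<otimes> y = c"
    using cc y by (simp add: m_assoc)
  then have ct: "c [^] t = c"
    using conj_y_eq_pow[OF c] by simp
  have c1: "c [^] (t - 1) = \<one>"
    using cc by (simp add: int_pow_diff ct)
  have cm: "c [^] (int m) = \<one>"
    by (simp add: int_pow_int pow_m_eq_one[OF c])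
  obtain u v where uv: "u * int m + v * (t - 1) = 1"
    using bezout_int[of "int m" "t - 1"] coprime_m_t by auto
  have "c = c [^] (u * int m + v * (t - 1))"
    using cc by (simp add: uv)
  also have "\<dots> = (c [^] (int m)) [^] u \<otimes> (c [^] (t - 1)) [^] v"
    using cc by (simp add: int_pow_mult int_pow_pow mult.commute)
  also have "\<dots> = \<one>"
    by (simp add: cm c1)
  finally show ?thesis .
qed

lemma bij_betw_commutator:
  assumes w: "w \<in> {y, inv y}"
  shows "bij_betw (\<lambda>h. h \<otimes> w \<otimes> inv h \<otimes> inv w) H H"
proof -
  have wc: "w \<in> carrier G"
    using w y by auto
  have inj: "inj_on (\<lambda>h. h \<otimes> w \<otimes> inv h \<otimes> inv w) H"
  proof
    fix h1 h2 assume h: "h1 \<in> H" "h2 \<in> H"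
      and eq: "h1 \<otimes> w \<otimes> inv h1 \<otimes> inv w = h2 \<otimes> w \<otimes> inv h2 \<otimes> inv w"
    have hc: "h1 \<in> carrier G" "h2 \<in> carrier G"
      using h subgroup_carrier by auto
    have "h1 \<otimes> w \<otimes> inv h1 = h2 \<otimes> w \<otimes> inv h2"
      using eq hc wc by simp
    then have "inv h2 \<otimes> (h1 \<otimes> w \<otimes> inv h1) \<otimes> h1 = inv h2 \<otimes> (h2 \<otimes> w \<otimes> inv h2) \<otimes> h1"
      by simp
    then have "(inv h2 \<otimes> h1) \<otimes> w = w \<otimes> (inv h2 \<otimes> h1)"
      using hc wc by (simp add: m_assoc)
    then have "inv h2 \<otimes> h1 = \<one>"
      using fixed_point_free[OF _ w] h subgroup.m_closed[OF H_subgroup] subgroup.m_inv_closed[OF H_subgroup]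
      by blast
    then show "h1 = h2"
      using hc by (metis inv_equality inv_inv inv_closed)
  qed
  moreover have "(\<lambda>h. h \<otimes> w \<otimes> inv h \<otimes> inv w) ` H \<subseteq> H"
  proof
    fix c assume "c \<in> (\<lambda>h. h \<otimes> w \<otimes> inv h \<otimes> inv w) ` H"
    then obtain h where h: "h \<in> H" and c: "c = h \<otimes> w \<otimes> inv h \<otimes> inv w"
      by blast
    have "c = h \<otimes> (w \<otimes> inv h \<otimes> inv w)"
      using c h wc subgroup_carrier by (simp add: m_assoc)
    then show "c \<in> H"
      using h wc normal_invE(2)[OF H_normal wc subgroup.m_inv_closed[OF H_subgroup h]]
        subgroup.m_closed[OF H_subgroup] by auto
  qed
  ultimately show ?thesis
    using endo_inj_surj[OF finite_subgroup] by (simp add: bij_betw_def)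
qed

lemma bij_betw_conj:
  assumes g: "g \<in> carrier G"
  shows "bij_betw (\<lambda>h. inv g \<otimes> h \<otimes> g) H H"
  by (rule bij_betw_byWitness[where f'="\<lambda>h. g \<otimes> h \<otimes> inv g"])
     (use g subgroup_carrier normal.inv_op_closed1[OF H_normal] normal.inv_op_closed2[OF H_normal]
      in \<open>auto simp: m_assoc\<close>)

lemma cube_inj_on_H: "inj_on (\<lambda>a. a \<otimes> a \<otimes> a) H"
proof
  fix a b assume a: "a \<in> H" and b: "b \<in> H" and eq: "a \<otimes> a \<otimes> a = b \<otimes> b \<otimes> b"
  have ac: "a \<in> carrier G" and bc: "b \<in> carrier G"
    using a b subgroup_carrier by auto
  let ?c = "a \<otimes> inv b"
  have cH: "?c \<in> H"
    using a b subgroup.m_closed[OF H_subgroup] subgroup.m_inv_closed[OF H_subgroup] by blast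
  have cc: "?c \<in> carrier G"
    using ac bc by simp
  have "?c [^] (3::nat) = a [^] (3::nat) \<otimes> inv b [^] (3::nat)"
    using ac bc a b H_commute subgroup.m_inv_closed[OF H_subgroup] by (intro pow_mult_distrib) auto
  also have "\<dots> = \<one>"
    using eq ac bc by (simp add: numeral_3_eq_3 nat_pow_inv[symmetric] m_assoc)
  finally have c3: "?c [^] (3::nat) = \<one>" .
  have "?c [^] m = ?c [^] (3 * k) \<otimes> ?c [^] (1::nat)"
    using cc by (simp add: m_eq nat_pow_mult)
  also have "\<dots> = ?c"
    using cc by (simp add: nat_pow_pow[symmetric] c3)
  finally have "?c = \<one>"
    using pow_m_eq_one[OF cH] by simp
  then show "a = b"
    using ac bc by (metis inv_equality inv_inv inv_closed)
qed

lemma hat_H_apply: "hat G H a = (if a \<in> H then 1 else 0)"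
  by (simp add: hat_def sum_fun_apply grp_elt_def finite_subgroup)

lemma hat_H_supported_on [simp]: "hat G H \<in> supported_on (carrier G)"
  using subgroup_carrier by (auto simp: supported_on_def hat_H_apply)

lemma conv_hat_H_left: "g \<in> carrier G \<Longrightarrow> (hat G H \<star> f) g = (\<Sum>h\<in>H. f (inv h \<otimes> g))"
  unfolding hat_def conv_sum_left sum_fun_apply
  by (rule sum.cong) (auto simp: conv_grp_elt_left subgroup_carrier)

lemma conv_hat_H_right: "g \<in> carrier G \<Longrightarrow> (f \<star> hat G H) g = (\<Sum>h\<in>H. f (g \<otimes> inv h))"
  unfolding hat_def conv_sum_right sum_fun_apply
  by (rule sum.cong) (auto simp: conv_grp_elt_right subgroup_carrier)

lemma hat_H_central: "hat G H \<star> f = f \<star> hat G H"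
proof
  fix g
  show "(hat G H \<star> f) g = (f \<star> hat G H) g"
  proof (cases "g \<in> carrier G")
    case False
    then show ?thesis
      by (simp add: conv_def)
  next
    case g: True
    have "(\<Sum>h\<in>H. f (g \<otimes> inv h)) = (\<Sum>h\<in>H. f (g \<otimes> inv (inv g \<otimes> h \<otimes> g)))"
      by (rule sum.reindex_bij_betw[OF bij_betw_conj[OF g], symmetric])
    also have "\<dots> = (\<Sum>h\<in>H. f (inv h \<otimes> g))"
      by (rule sum.cong[OF refl]) (use g subgroup_carrier in \<open>simp add: inv_mult_group m_assoc\<close>)
    finally show ?thesis
      using g by (simp add: conv_hat_H_left conv_hat_H_right)
  qed
qed

lemma hat_H_conv_grp_elt: "h \<in> H \<Longrightarrow> hat G H \<star> grp_elt G h = hat G H"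
proof
  fix g assume h: "h \<in> H"
  have "g \<otimes> inv h \<in> H \<longleftrightarrow> g \<in> H" if "g \<in> carrier G"
  proof
    assume "g \<otimes> inv h \<in> H"
    then have "g \<otimes> inv h \<otimes> h \<in> H"
      using h subgroup.m_closed[OF H_subgroup] by blast
    then show "g \<in> H"
      using that h subgroup_carrier by (simp add: m_assoc)
  qed (use h subgroup.m_closed[OF H_subgroup] subgroup.m_inv_closed[OF H_subgroup] in blast)
  then show "(hat G H \<star> grp_elt G h) g = hat G H g"
    using h subgroup_carrier by (auto simp: conv_grp_elt_right hat_H_apply)
qed

lemma rel_aug_ideal_annihilated:
  "rel_aug_ideal G H \<subseteq> {f \<in> supported_on (carrier G). hat G H \<star> f = (0 :: 'g \<Rightarrow> 'f::field)}"
proof -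
  interpret FG: ring "group_algebra G :: ('g \<Rightarrow> 'f) ring"
    by (rule ring_group_algebra)
  have "ideal {f \<in> carrier (group_algebra G). hat G H \<otimes>\<^bsub>group_algebra G\<^esub> f = \<zero>\<^bsub>group_algebra G\<^esub>}
      (group_algebra G :: ('g \<Rightarrow> 'f) ring)"
    by (rule FG.ideal_annihilator_central) (simp_all add: group_algebra_simps hat_H_central)
  moreover have "(\<lambda>g. grp_elt G h g - grp_elt G \<one> g) \<in> {f \<in> supported_on (carrier G). hat G H \<star> f = (0 :: 'g \<Rightarrow> 'f)}"
    if "h \<in> H" for h
  proof -
    have "grp_elt G h - (grp_elt G \<one> :: 'g \<Rightarrow> 'f) \<in> supported_on (carrier G)"
      and "hat G H \<star> (grp_elt G h - (grp_elt G \<one> :: 'g \<Rightarrow> 'f)) = 0"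
      using that subgroup_carrier subgroup.one_closed[OF H_subgroup]
      by (simp_all add: conv_diff_right hat_H_conv_grp_elt)
    then show ?thesis
      by (simp add: fun_diff_def)
  qed
  ultimately show ?thesis
    unfolding rel_aug_ideal_def by (intro FG.genideal_minimal) (auto simp: group_algebra_simps)
qed

lemma one_y_inv_y_distinct: "\<one> \<noteq> y" "\<one> \<noteq> inv y" "y \<noteq> inv y"
proof -
  show "\<one> \<noteq> y" and "\<one> \<noteq> inv y"
    using y_notin_H subgroup.one_closed[OF H_subgroup] mult_inv_y_notin_H[of \<one>] y by auto
  show "y \<noteq> inv y"
    using \<open>\<one> \<noteq> inv y\<close> y inv_y_mult_inv_y by (metis l_inv)
qed

lemma hat_Y_eq: "hat G Y = grp_elt G \<one> + grp_elt G y + (grp_elt G (inv y) :: 'g \<Rightarrow> 'f::field)"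
  using one_y_inv_y_distinct by (simp add: hat_def add.assoc)

lemma hat_Y_supported_on [simp]: "hat G Y \<in> supported_on (carrier G)"
  using y by (simp add: hat_Y_eq)

lemma conv_hat_Y_right:
  "f \<star> hat G Y = (\<lambda>g. if g \<in> carrier G then f g + f (g \<otimes> inv y) + f (g \<otimes> y) else 0)"
  using y by (simp add: hat_Y_eq conv_add_right conv_grp_elt_right fun_eq_iff)

lemma hat_Y_conv_y: "hat G Y \<star> grp_elt G y = hat G Y"
  using y by (simp add: hat_Y_eq conv_add_left conv_grp_elt_grp_elt add_ac flip: inv_y_eq)

lemma sum_conj_hat_Y:
  assumes m1: "(of_nat m :: 'f::field) = 1"
  shows "(\<Sum>h\<in>H. grp_elt G h \<star> hat G Y \<star> grp_elt G (inv h))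
     = grp_elt G \<one> + hat G H \<star> grp_elt G y + (hat G H \<star> grp_elt G (inv y) :: 'g \<Rightarrow> 'f)"
proof -
  have conj_sum: "(\<Sum>h\<in>H. grp_elt G (h \<otimes> w \<otimes> inv h)) = (hat G H \<star> grp_elt G w :: 'g \<Rightarrow> 'f)"
    if w: "w \<in> {y, inv y}" for w
  proof -
    have wc: "w \<in> carrier G"
      using w y by auto
    have "(\<Sum>h\<in>H. grp_elt G (h \<otimes> w \<otimes> inv h))
        = (\<Sum>h\<in>H. grp_elt G ((h \<otimes> w \<otimes> inv h \<otimes> inv w) \<otimes> w) :: 'g \<Rightarrow> 'f)"
      by (rule sum.cong[OF refl]) (use wc subgroup_carrier in \<open>simp add: m_assoc\<close>)
    also have "\<dots> = (\<Sum>c\<in>H. grp_elt G (c \<otimes> w))"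
      by (rule sum.reindex_bij_betw[OF bij_betw_commutator[OF w]])
    also have "\<dots> = hat G H \<star> grp_elt G w"
      unfolding hat_def conv_sum_left
      by (rule sum.cong[OF refl]) (use wc subgroup_carrier in \<open>simp add: conv_grp_elt_grp_elt\<close>)
    finally show ?thesis .
  qed
  have conj_term: "grp_elt G h \<star> hat G Y \<star> grp_elt G (inv h)
      = grp_elt G \<one> + grp_elt G (h \<otimes> y \<otimes> inv h) + (grp_elt G (h \<otimes> inv y \<otimes> inv h) :: 'g \<Rightarrow> 'f)"
    if "h \<in> H" for h
    using subgroup_carrier[OF that] y
    by (simp add: hat_Y_eq conv_add_left conv_add_right conv_grp_elt_grp_elt m_assoc)
  have card: "(\<Sum>h\<in>H. (grp_elt G \<one> :: 'g \<Rightarrow> 'f)) = grp_elt G \<one>"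
    by (simp add: fun_eq_iff sum_fun_apply card_H m1)
  have "(\<Sum>h\<in>H. grp_elt G h \<star> hat G Y \<star> grp_elt G (inv h))
      = (\<Sum>h\<in>H. grp_elt G \<one> + grp_elt G (h \<otimes> y \<otimes> inv h) + (grp_elt G (h \<otimes> inv y \<otimes> inv h) :: 'g \<Rightarrow> 'f))"
    by (rule sum.cong[OF refl]) (rule conj_term)
  also have "\<dots> = (\<Sum>h\<in>H. grp_elt G \<one>) + (\<Sum>h\<in>H. grp_elt G (h \<otimes> y \<otimes> inv h))
      + (\<Sum>h\<in>H. grp_elt G (h \<otimes> inv y \<otimes> inv h))"
    by (simp only: sum.distrib)
  also have "\<dots> = grp_elt G \<one> + hat G H \<star> grp_elt G y + hat G H \<star> grp_elt G (inv y)"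
    by (simp only: card conj_sum[OF insertI1] conj_sum[OF insertI2[OF singletonI]])
  finally show ?thesis .
qed

lemma hat_H_conv_grp_elt_conv:
  assumes "hat G H \<star> v = 0"
  shows "hat G H \<star> grp_elt G w \<star> v = 0" and "v \<star> hat G H \<star> grp_elt G w = 0"
proof -
  have "hat G H \<star> grp_elt G w \<star> v = (hat G H \<star> grp_elt G w) \<star> v"
    by (simp only: conv_assoc)
  also have "\<dots> = grp_elt G w \<star> hat G H \<star> v"
    by (simp only: hat_H_central conv_assoc)
  finally show "hat G H \<star> grp_elt G w \<star> v = 0"
    by (simp add: assms)
  have "v \<star> hat G H \<star> grp_elt G w = (v \<star> hat G H) \<star> grp_elt G w"
    by (simp only: conv_assoc)
  then show "v \<star> hat G H \<star> grp_elt G w = 0"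
    by (simp add: assms hat_H_central[symmetric])
qed

lemma sum_conj_hat_Y_conv:
  assumes m1: "(of_nat m :: 'f::field) = 1"
    and v: "(v :: 'g \<Rightarrow> 'f) \<in> supported_on (carrier G)" and annihilated: "hat G H \<star> v = 0"
  shows "(\<Sum>h\<in>H. grp_elt G h \<star> hat G Y \<star> grp_elt G (inv h)) \<star> v = v"
    and "v \<star> (\<Sum>h\<in>H. grp_elt G h \<star> hat G Y \<star> grp_elt G (inv h)) = v"
  using v hat_H_conv_grp_elt_conv[OF annihilated]
  by (simp_all add: sum_conj_hat_Y[OF m1] conv_add_left conv_add_right conv_assoc)

lemma restrict_H_conv_hat_Y:
  assumes P: "P \<in> supported_on (carrier G)" and Py: "P \<star> grp_elt G y = P"
  shows "(\<lambda>g. if g \<in> H then P g else 0) \<star> hat G Y = P"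
proof
  fix g
  have invariant: "P (a \<otimes> inv y) = P a" if "a \<in> carrier G" for a
    using fun_cong[OF Py, of a] that y by (simp add: conv_grp_elt_right)
  show "((\<lambda>g. if g \<in> H then P g else 0) \<star> hat G Y) g = P g"
  proof (cases "g \<in> carrier G")
    case False
    then show ?thesis
      using P by (simp add: conv_hat_Y_right supported_on_def)
  next
    case g: True
    have "P (g \<otimes> y) = P g"
      using invariant[of "g \<otimes> y"] g y by (simp add: m_assoc)
    then show ?thesis
      using coset_trichotomy[OF g] g invariant[OF g] by (auto simp: conv_hat_Y_right)
  qed
qed

lemma supported_on_H_conv_hat_Y_eq_zero:
  assumes \<nu>: "\<nu> \<in> supported_on H" and zero: "\<nu> \<star> hat G Y = 0"
  shows "\<nu> = 0"
proof
  fix g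
  show "\<nu> g = 0 g"
  proof (cases "g \<in> H")
    case True
    then have "\<nu> g + \<nu> (g \<otimes> inv y) + \<nu> (g \<otimes> y) = 0"
      using fun_cong[OF zero, of g] subgroup_carrier by (simp add: conv_hat_Y_right)
    then show ?thesis
      using coset_trichotomy[OF subgroup_carrier[OF True]] True \<nu> by (auto simp: supported_on_def)
  next
    case False
    then show ?thesis
      using \<nu> by (simp add: supported_on_def)
  qed
qed

lemma supported_on_H_conv_grp_elt_hat_Y_eq_zero:
  assumes \<nu>: "\<nu> \<in> supported_on H" and h: "h \<in> H" and zero: "(\<nu> \<star> grp_elt G h) \<star> hat G Y = 0"
  shows "\<nu> = 0"
proof -
  have "\<nu> \<star> grp_elt G h = 0"
    by (rule supported_on_H_conv_hat_Y_eq_zero[OF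
          conv_supported_on_subgroup[OF \<nu> grp_elt_supported_on[OF h]] zero])
  then have "\<nu> \<star> grp_elt G h \<star> grp_elt G (inv h) = 0"
    by (simp add: conv_assoc[symmetric])
  then show "\<nu> = 0"
    using subgroup_carrier[OF h] supported_on_subgroup_carrier[OF \<nu>] by (simp add: conv_grp_elt_grp_elt)
qed

lemma hat_Y_sandwich_eq_zero:
  fixes z :: "'g \<Rightarrow> 'f::{field,finite}"
  assumes char3: "(3 :: 'f) = 0" and z: "z \<in> jacobson_radical (group_algebra G)" and h: "h \<in> H"
  shows "hat G Y \<star> z \<star> grp_elt G h \<star> hat G Y = 0"
proof -
  let ?N = "hat G Y :: 'g \<Rightarrow> 'f" and ?h = "grp_elt G h :: 'g \<Rightarrow> 'f"
  define P where "P = ?N \<star> z \<star> ?h \<star> ?N"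
  define l where "l = (\<lambda>g. if g \<in> H then P g else 0)"
  have l: "l \<in> supported_on H"
    by (simp add: l_def supported_on_def)
  have P_eq: "l \<star> ?N = P"
    unfolding l_def by (rule restrict_H_conv_hat_Y) (simp_all add: P_def conv_assoc hat_Y_conv_y)
  have h_l: "?h \<star> l = l \<star> ?h"
    using h l by (intro conv_commute_supported_on_subgroup) simp_all
  define u where "u = ?h \<star> ?N \<star> z"
  have "u \<star> u = ?h \<star> P \<star> z"
    by (simp add: u_def P_def conv_assoc)
  also have "\<dots> = l \<star> u"
    by (simp only: P_eq[symmetric] u_def conv_assoc[symmetric] h_l)
  finally have square: "u \<star> u = l \<star> u" .
  have "u \<in> jacobson_radical (group_algebra G)"
    unfolding u_def conv_assoc[symmetric] by (rule jacobson_radical_conv_left[OF _ z]) simp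
  then obtain n :: nat where nil: "u [^]\<^bsub>group_algebra G\<^esub> n = 0"
    by (rule group_algebra_jacobson_radical_nil)
  have "l [^]\<^bsub>group_algebra G\<^esub> n \<star> u = 0"
    by (rule group_algebra_pow_conv_eq_zero_of_square_eq[OF _ square nil]) (simp add: u_def)
  have "(l [^]\<^bsub>group_algebra G\<^esub> Suc n \<star> ?h) \<star> ?N = l [^]\<^bsub>group_algebra G\<^esub> n \<star> (l \<star> ?h) \<star> ?N"
    by (simp only: group_algebra_pow_Suc conv_assoc)
  also have "\<dots> = l [^]\<^bsub>group_algebra G\<^esub> n \<star> (?h \<star> l) \<star> ?N"
    by (simp only: h_l)
  also have "\<dots> = (l [^]\<^bsub>group_algebra G\<^esub> n \<star> u) \<star> ?h \<star> ?N"
    by (simp only: P_eq P_def u_def conv_assoc)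
  also have "\<dots> = 0"
    by (simp add: \<open>l [^]\<^bsub>group_algebra G\<^esub> n \<star> u = 0\<close>)
  finally have "l [^]\<^bsub>group_algebra G\<^esub> Suc n = 0"
    by (rule supported_on_H_conv_grp_elt_hat_Y_eq_zero[OF pow_supported_on_subgroup[OF l] h])
  then have "l = 0"
    by (rule nilpotent_supported_on_subgroup_eq_zero[OF char3 cube_inj_on_H l])
  then show ?thesis
    using P_eq by (simp add: P_def)
qed

lemma jacobson_radical_annihilated_eq_zero:
  fixes z :: "'g \<Rightarrow> 'f::{field,finite}"
  assumes char3: "(3 :: 'f) = 0" and m1: "(of_nat m :: 'f) = 1"
    and z: "z \<in> jacobson_radical (group_algebra G)" and annihilated: "hat G H \<star> z = 0"
  shows "z = 0"
proof -
  have z_carrier: "z \<in> supported_on (carrier G)"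
    using z by (simp add: jacobson_radical_def group_algebra_simps)
  have right_zero: "z \<star> grp_elt G h \<star> hat G Y = 0" if h: "h \<in> H" for h
  proof -
    let ?w = "z \<star> grp_elt G h \<star> hat G Y"
    have "hat G H \<star> ?w = 0"
      by (simp add: conv_assoc[symmetric] annihilated)
    then have "?w = (\<Sum>h'\<in>H. grp_elt G h' \<star> hat G Y \<star> grp_elt G (inv h')) \<star> ?w"
      by (simp add: sum_conj_hat_Y_conv(1)[OF m1])
    also have "\<dots> = (\<Sum>h'\<in>H. grp_elt G h' \<star> (hat G Y \<star> (grp_elt G (inv h') \<star> z) \<star> grp_elt G h \<star> hat G Y))"
      by (simp add: conv_sum_left conv_assoc)
    also have "\<dots> = 0"
      using h subgroup_carrier
      by (simp add: hat_Y_sandwich_eq_zero[OF char3 jacobson_radical_conv_left[OF _ z]])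
    finally show ?thesis .
  qed
  have "z = z \<star> (\<Sum>h\<in>H. grp_elt G h \<star> hat G Y \<star> grp_elt G (inv h))"
    by (simp add: sum_conj_hat_Y_conv(2)[OF m1 z_carrier annihilated])
  also have "\<dots> = (\<Sum>h\<in>H. (z \<star> grp_elt G h \<star> hat G Y) \<star> grp_elt G (inv h))"
    by (simp add: conv_sum_right conv_assoc)
  also have "\<dots> = 0"
    by (simp add: right_zero)
  finally show ?thesis .
qed


end

theorem proposition3p8:
  fixes G :: "('g, 'b) monoid_scheme" and x y :: 'g and k m :: nat and t :: int
  assumes "CHAR('f::{finite,field}) = 3"
    and "m = 3 * k + 1"
    and "t ^ 3 mod int m = 1 mod int m"
    and "gcd (int m) (t - 1) = 1"
    and "group G"
    and "x \<in> carrier G" and "y \<in> carrier G"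
    and "generate G {x, y} = carrier G"
    and "x [^]\<^bsub>G\<^esub> m = \<one>\<^bsub>G\<^esub>"
    and "y [^]\<^bsub>G\<^esub> (3::nat) = \<one>\<^bsub>G\<^esub>"
    and "inv\<^bsub>G\<^esub> y \<otimes>\<^bsub>G\<^esub> x \<otimes>\<^bsub>G\<^esub> y = x [^]\<^bsub>G\<^esub> t"
    and "order G = 3 * m"
  shows "jacobson_radical (group_algebra G :: ('g \<Rightarrow> 'f) ring)
           \<inter> (rel_aug_ideal G (generate G {x}) :: ('g \<Rightarrow> 'f) set)
         = {\<zero>\<^bsub>(group_algebra G :: ('g \<Rightarrow> 'f) ring)\<^esub>}"
proof -
  have fin: "finite (carrier G)"
    using assms(2,12) by (auto simp: order_def intro: card_ge_0_finite)
  interpret T3m_group G x y m k t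
    by (intro T3m_group.intro finite_group.intro finite_group_axioms.intro T3m_group_axioms.intro
        fin assms(5)) (rule assms)+
  interpret FG: ring "group_algebra G :: ('g \<Rightarrow> 'f) ring"
    by (rule ring_group_algebra)
  have char3: "(3 :: 'f) = 0"
    using of_nat_CHAR[where 'a='f] assms(1) by simp
  have m1: "(of_nat m :: 'f) = 1"
    using char3 assms(2) by simp
  show ?thesis
  proof (intro equalityI subsetI)
    fix z :: "'g \<Rightarrow> 'f"
    assume z: "z \<in> jacobson_radical (group_algebra G) \<inter> rel_aug_ideal G H"
    then have "hat G H \<star> z = 0"
      using rel_aug_ideal_annihilated by blast
    then show "z \<in> {\<zero>\<^bsub>group_algebra G\<^esub>}"
      using z jacobson_radical_annihilated_eq_zero[OF char3 m1] by (simp add: group_algebra_simps)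
  qed (use FG.zero_mem_jacobson_radical FG.zero_mem_genideal in \<open>auto simp: rel_aug_ideal_def\<close>)
qed

end
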